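(* Let $\gamma:\mathbb{R}\to\mathbb{R}^3$ be a $C^\infty$ regular $l$-periodic curve and $\xi$ a $C^\infty$ $l$-odd-periodic vector field along $\gamma$ with $\gamma'(s),\xi(s)$ linearly independent for all $s$ and $\det(\gamma',\xi,\xi')\equiv 0$. Let $\tilde F(s,u)=\gamma(s)+u\xi(s)$, $(s,u)\in\mathbb{R}^2$, be the asymptotic completion, regarded on $M=\mathbb{R}^2/\!\sim$, and $S(F)\subset M$ its singular set. Then $\tilde F$ has at least one singular point which is not a cuspidal edge singularity on each connected component of $S(F)$. In particular, $\tilde F$ has at least one singular point which is not a cuspidal edge singularity.
   Context: $l$-periodic means $\gamma(s+l)=\gamma(s)$; regular means $\gamma'\neq0$; $l$-odd-periodic means $\xi(s+l)=-\xi(s)$; $\sim$ identifies $(s,u)$ with $(s+l,-u)$. A singular point is a point where the Jacobian has rank $<2$. Map germs $f_1$ at $p_1$, $f_2$ at $p_2$ are right-left equivalent if there are diffeomorphisms $\varphi$ of $\mathbb{R}^2$, $\Phi$ of $\mathbb{R}^3$ with $\varphi(p_1)=p_2$ and $\Phi\circ f_1=f_2\circ\varphi$ near $p_1$. A singular point $p$ is a cuspidal edge if the germ at $p$ is right-left equivalent to the germ at $0$ of $f_C(u,v)=(2u^3,-3u^2,v)$. *)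

theory Defs
  imports "HOL-Analysis.Analysis"
begin

fun Ck :: "nat \<Rightarrow> ('a::euclidean_space \<Rightarrow> 'b::real_normed_vector) \<Rightarrow> bool" where
  "Ck 0 f = continuous_on UNIV f"
| "Ck (Suc k) f = ((\<forall>x. f differentiable (at x)) \<and>
       (\<forall>i\<in>Basis. Ck k (\<lambda>x. frechet_derivative f (at x) i)))"

definition smooth :: "('a::euclidean_space \<Rightarrow> 'b::real_normed_vector) \<Rightarrow> bool" where
  "smooth f \<longleftrightarrow> (\<forall>k. Ck k f)"

definition diffeo :: "('a::euclidean_space \<Rightarrow> 'a) \<Rightarrow> bool" where
  "diffeo \<phi> \<longleftrightarrow> bij \<phi> \<and> smooth \<phi> \<and> smooth (inv \<phi>)"

definition periodic :: "real \<Rightarrow> (real \<Rightarrow> 'b) \<Rightarrow> bool" where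
  "periodic l g \<longleftrightarrow> (\<forall>s. g (s + l) = g s)"

definition odd_periodic :: "real \<Rightarrow> (real \<Rightarrow> 'b::uminus) \<Rightarrow> bool" where
  "odd_periodic l g \<longleftrightarrow> (\<forall>s. g (s + l) = - g s)"

definition asym_completion ::
  "(real \<Rightarrow> real^3) \<Rightarrow> (real \<Rightarrow> real^3) \<Rightarrow> real \<times> real \<Rightarrow> real^3" where
  "asym_completion \<gamma> \<xi> = (\<lambda>(s, u). \<gamma> s + u *\<^sub>R \<xi> s)"

definition mob_rel :: "real \<Rightarrow> ((real \<times> real) \<times> (real \<times> real)) set" where
  "mob_rel l = {((s, u), (t, v)). \<exists>n::int. t = s + of_int n * l \<and> v = (if even n then u else - u)}"

definition quot_top :: "('a::topological_space \<times> 'a) set \<Rightarrow> 'a set topology" where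
  "quot_top E = topology (\<lambda>U. U \<subseteq> UNIV // E \<and> open (\<Union>U))"

definition mob_top :: "real \<Rightarrow> (real \<times> real) set topology" where
  "mob_top l = quot_top (mob_rel l)"

definition singular_point :: "('a::euclidean_space \<Rightarrow> 'b::euclidean_space) \<Rightarrow> 'a \<Rightarrow> bool" where
  "singular_point f p \<longleftrightarrow> dim (range (frechet_derivative f (at p))) < 2"

definition rl_equivalent ::
  "('a::euclidean_space \<Rightarrow> 'b::euclidean_space) \<Rightarrow> 'a \<Rightarrow> ('a \<Rightarrow> 'b) \<Rightarrow> 'a \<Rightarrow> bool" where
  "rl_equivalent f1 p1 f2 p2 \<longleftrightarrow>
     (\<exists>\<phi> \<Phi>. diffeo \<phi> \<and> diffeo \<Phi> \<and> \<phi> p1 = p2 \<and>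
        (\<exists>U. open U \<and> p1 \<in> U \<and> (\<forall>x\<in>U. \<Phi> (f1 x) = f2 (\<phi> x))))"

definition fC :: "real \<times> real \<Rightarrow> real^3" where
  "fC = (\<lambda>(u, v). vector [2 * u ^ 3, - 3 * u ^ 2, v])"

definition cuspidal_edge :: "(real \<times> real \<Rightarrow> real^3) \<Rightarrow> real \<times> real \<Rightarrow> bool" where
  "cuspidal_edge f p \<longleftrightarrow> singular_point f p \<and> rl_equivalent f p fC 0"

definition singular_set :: "real \<Rightarrow> (real \<times> real \<Rightarrow> real^3) \<Rightarrow> (real \<times> real) set set" where
  "singular_set l f = {c \<in> UNIV // mob_rel l. \<forall>p\<in>c. singular_point f p}"

lemma istopology_quot:
  assumes "equiv UNIV E"
  shows "istopology (\<lambda>U. U \<subseteq> UNIV // E \<and> open (\<Union>U))"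
proof -
  have *: "\<Union>(S \<inter> T) = \<Union>S \<inter> \<Union>T" if "S \<subseteq> UNIV // E" "T \<subseteq> UNIV // E" for S T
  proof
    show "\<Union>S \<inter> \<Union>T \<subseteq> \<Union>(S \<inter> T)"
    proof
      fix x assume "x \<in> \<Union>S \<inter> \<Union>T"
      then obtain A B where AB: "A \<in> S" "B \<in> T" "x \<in> A" "x \<in> B" by blast
      have "A = B" using quotient_disj[OF assms, of A B] AB that by blast
      thus "x \<in> \<Union>(S \<inter> T)" using AB by blast
    qed
  qed blast
  show ?thesis unfolding istopology_def
  proof (rule conjI; intro allI impI)
    fix S T :: "'a set set"
    assume "S \<subseteq> UNIV // E \<and> open (\<Union>S)" "T \<subseteq> UNIV // E \<and> open (\<Union>T)"
    then show "S \<inter> T \<subseteq> UNIV // E \<and> open (\<Union>(S \<inter> T))"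
      using *[of S T] by (auto intro: open_Int)
  next
    fix K :: "'a set set set"
    assume "\<forall>U\<in>K. U \<subseteq> UNIV // E \<and> open (\<Union>U)"
    then show "\<Union>K \<subseteq> UNIV // E \<and> open (\<Union>(\<Union>K))"
    proof -
      have "\<Union>(\<Union>K) = \<Union>((\<lambda>U. \<Union>U) ` K)" by blast
      moreover have "open (\<Union>((\<lambda>U. \<Union>U) ` K))"
        using \<open>\<forall>U\<in>K. _\<close> by (intro open_Union) blast
      ultimately show ?thesis using \<open>\<forall>U\<in>K. _\<close> by auto
    qed
  qed
qed

lemma equiv_mob_rel: "equiv UNIV (mob_rel l)"
proof (rule equivI)
  show "mob_rel l \<subseteq> UNIV \<times> UNIV" by simp
  show "refl (mob_rel l)"
    unfolding refl_on_def mob_rel_def by (auto intro: exI[of _ 0])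
  show "sym (mob_rel l)"
    unfolding sym_def mob_rel_def
  proof (clarify)
    fix s n and u :: real
    show "\<exists>m::int. s = s + of_int n * l + of_int m * l \<and> u = (if even m then (if even n then u else - u) else - (if even n then u else - u))"
      by (rule exI[of _ "- n"]) (cases "even n"; cases "even m"; simp add: algebra_simps)
  qed
  show "trans (mob_rel l)"
    unfolding trans_def mob_rel_def
  proof (clarify)
    fix s n m and u :: real
    show "\<exists>k::int. s + of_int n * l + of_int m * l = s + of_int k * l \<and>
       (if even m then (if even n then u else - u) else - (if even n then u else - u)) = (if even k then u else - u)"
      by (rule exI[of _ "n + m"]) (cases "even n"; cases "even m"; simp add: algebra_simps)
  qed
qed
end

theory Submission
  imports Defs
begin

text \<open>Since det(\<gamma>', \<xi>, \<xi>') = 0, write \<xi>' = a \<gamma>' + b \<xi>. Then dF at (s, u) has rank < 2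
  iff u a(s) = -1, so the singular set is covered by the graphs u = -1/a over the intervals
  where a \<noteq> 0, and the null direction of dF there is (1, b/a). Odd periodicity of \<xi> makes a
  odd periodic, so a vanishes in every period; a is not identically zero, since otherwise
  \<xi>' = b \<xi> would make \<xi>(l) a positive multiple of \<xi>(0) = -\<xi>(l). On an interval (s0, s1)
  between consecutive zeros of a, Rolle's theorem for e^(-B) a with B' = b gives t with
  a'(t) = a(t) b(t): there the null direction is tangent to the singular curve t \<mapsto> (t, -1/a t).
  Such a point is not a cuspidal edge, because a chart taking F to the normal form maps the
  singular curve into the line u = 0, transversal to the null direction of the normal form.\<close>

lemma independent_pairI:
  fixes v w :: "'a::real_vector"
  assumes "\<And>c d. c *\<^sub>R v + d *\<^sub>R w = 0 \<Longrightarrow> c = 0 \<and> d = 0"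
  shows "independent {v, w}" and "v \<noteq> w"
proof -
  have "v \<notin> span {w}"
  proof
    assume "v \<in> span {w}"
    then obtain k where "v = k *\<^sub>R w" by (auto simp: span_singleton)
    then show False using assms[of 1 "-k"] by auto
  qed
  moreover have "independent {w}"
  proof -
    have "w \<noteq> 0" using assms[of 0 1] by auto
    then show ?thesis by (simp add: independent_insert)
  qed
  ultimately show "independent {v, w}" by (rule independent_insertI)
  show "v \<noteq> w" using assms[of 1 "-1"] by auto
qed

lemma two_le_dim_if_independent_pair:
  fixes v w :: "'a::euclidean_space"
  assumes "v \<in> S" "w \<in> S" and "\<And>c d. c *\<^sub>R v + d *\<^sub>R w = 0 \<Longrightarrow> c = 0 \<and> d = 0"
  shows "2 \<le> dim S"
proof -
  have "card {v, w} \<le> dim S"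
    using independent_pairI(1)[of v w, OF assms(3)] assms(1,2)
    by (intro independent_card_le_dim) auto
  then show ?thesis using independent_pairI(2)[of v w, OF assms(3)] by simp
qed

lemma det_eq_0_imp_in_span_pair:
  fixes g x y :: "real^3"
  assumes indep: "\<And>c d. c *\<^sub>R g + d *\<^sub>R x = 0 \<Longrightarrow> c = 0 \<and> d = 0"
    and det: "det (vector [g, x, y] :: real^3^3) = 0"
  shows "y \<in> span {g, x}"
proof (rule ccontr)
  let ?A = "vector [g, x, y] :: real^3^3"
  assume y: "y \<notin> span {g, x}"
  have "independent {y, g, x}"
    using y independent_pairI(1)[of g x, OF indep] by (rule independent_insertI)
  moreover have "rows ?A = {y, g, x}"
  proof -
    have "rows ?A = (\<lambda>i. ?A $ i) ` UNIV" by (auto simp: rows_def row_def vec_lambda_eta)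
    then show ?thesis by (auto simp: UNIV_3)
  qed
  moreover have "card {y, g, x} = 3"
  proof -
    have "y \<notin> {g, x}" using y span_base[of _ "{g, x}"] by blast
    then show ?thesis using independent_pairI(2)[of g x, OF indep] by simp
  qed
  ultimately have "rank ?A = 3"
    by (metis row_rank_def dim_eq_card_independent)
  moreover have "rank ?A < CARD(3)"
    using det det_eq_0_rank by blast
  ultimately show False by simp
qed

text \<open>Coordinates of y in the basis g, x, by Cramer's rule on the Gram system; the explicit
  formula shows that they depend smoothly on g, x, y.\<close>

definition span_pair_coeff_fst :: "'a::real_inner \<Rightarrow> 'a \<Rightarrow> 'a \<Rightarrow> real" where
  "span_pair_coeff_fst g x y =
     ((y \<bullet> g) * (x \<bullet> x) - (y \<bullet> x) * (g \<bullet> x)) / ((g \<bullet> g) * (x \<bullet> x) - (g \<bullet> x)\<^sup>2)"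

definition span_pair_coeff_snd :: "'a::real_inner \<Rightarrow> 'a \<Rightarrow> 'a \<Rightarrow> real" where
  "span_pair_coeff_snd g x y =
     ((g \<bullet> g) * (y \<bullet> x) - (g \<bullet> x) * (y \<bullet> g)) / ((g \<bullet> g) * (x \<bullet> x) - (g \<bullet> x)\<^sup>2)"

lemma gram_det_nonzero:
  fixes g x :: "'a::real_inner"
  assumes indep: "\<And>c d. c *\<^sub>R g + d *\<^sub>R x = 0 \<Longrightarrow> c = 0 \<and> d = 0"
  shows "(g \<bullet> g) * (x \<bullet> x) - (g \<bullet> x)\<^sup>2 \<noteq> 0"
proof -
  define v where "v = (x \<bullet> x) *\<^sub>R g - (g \<bullet> x) *\<^sub>R x"
  have "x \<noteq> 0" using indep[of 0 1] by auto
  then have "v \<noteq> 0" using indep[of "x \<bullet> x" "- (g \<bullet> x)"] by (auto simp: v_def)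
  moreover have "v \<bullet> v = (x \<bullet> x) * ((g \<bullet> g) * (x \<bullet> x) - (g \<bullet> x)\<^sup>2)"
    by (simp add: v_def inner_diff_left inner_diff_right inner_commute power2_eq_square
        algebra_simps)
  ultimately show ?thesis by auto
qed

lemma in_span_pair_eq_coeffs:
  fixes g x y :: "'a::real_inner"
  assumes indep: "\<And>c d. c *\<^sub>R g + d *\<^sub>R x = 0 \<Longrightarrow> c = 0 \<and> d = 0"
    and "y \<in> span {g, x}"
  shows "y = span_pair_coeff_fst g x y *\<^sub>R g + span_pair_coeff_snd g x y *\<^sub>R x"
proof -
  obtain \<alpha> \<beta> where y: "y = \<alpha> *\<^sub>R g + \<beta> *\<^sub>R x"
    using assms(2) by (auto simp: span_insert span_singleton diff_eq_eq add.commute)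
  have "y \<bullet> g = \<alpha> * (g \<bullet> g) + \<beta> * (g \<bullet> x)" "y \<bullet> x = \<alpha> * (g \<bullet> x) + \<beta> * (x \<bullet> x)"
    using y by (auto simp: inner_add_left inner_add_right inner_commute)
  then have "span_pair_coeff_fst g x y = \<alpha>" "span_pair_coeff_snd g x y = \<beta>"
    using gram_det_nonzero[of g x, OF indep]
    by (simp_all add: span_pair_coeff_fst_def span_pair_coeff_snd_def field_simps power2_eq_square)
  then show ?thesis using y by simp
qed

lemma smooth_differentiable: "smooth f \<Longrightarrow> f differentiable (at x)"
  unfolding smooth_def by (metis Ck.simps(2))

lemma frechet_derivative_eq_vector_derivative:
  fixes f :: "real \<Rightarrow> 'b::real_normed_vector"
  assumes "f differentiable (at x)"
  shows "frechet_derivative f (at x) = (\<lambda>h. h *\<^sub>R vector_derivative f (at x))"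
  using vector_derivative_works[THEN iffD1, OF assms]
  unfolding has_vector_derivative_def by (rule frechet_derivative_at[symmetric])

lemma smooth_has_vector_derivative:
  fixes f :: "real \<Rightarrow> 'b::real_normed_vector"
  assumes "smooth f"
  shows "(f has_vector_derivative vector_derivative f (at x)) (at x)"
  using smooth_differentiable[OF assms] by (simp add: vector_derivative_works[symmetric])

lemma smooth_vector_derivative_differentiable:
  fixes f :: "real \<Rightarrow> 'b::real_normed_vector"
  assumes "smooth f"
  shows "(\<lambda>x. vector_derivative f (at x)) differentiable (at x)"
proof -
  have C2: "Ck (Suc (Suc 0)) f" using assms by (simp add: smooth_def)
  then have "Ck (Suc 0) (\<lambda>x. frechet_derivative f (at x) 1)" by simp
  then show ?thesis using C2 by (simp add: frechet_derivative_eq_vector_derivative)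
qed

lemma exists_antiderivative:
  fixes f :: "real \<Rightarrow> real"
  assumes "continuous_on UNIV f"
  obtains B where "\<And>x. x \<in> {c..d} \<Longrightarrow> (B has_real_derivative f x) (at x)"
proof
  fix x assume x: "x \<in> {c..d}"
  have "((\<lambda>u. integral {c - 1..u} f) has_vector_derivative f x) (at x within {c - 1..d + 1})"
    using x by (intro integral_has_vector_derivative continuous_on_subset[OF assms]) auto
  moreover have "at x within {c - 1..d + 1} = at x" using x by (intro at_within_Icc_at) auto
  ultimately show "((\<lambda>u. integral {c - 1..u} f) has_real_derivative f x) (at x)"
    by (simp add: has_real_derivative_iff_has_vector_derivative)
qed

lemma linear_ode_antiperiodic_solution_zero:
  fixes \<xi> :: "real \<Rightarrow> 'a::real_normed_vector"
  assumes ode: "\<And>x. (\<xi> has_vector_derivative b x *\<^sub>R \<xi> x) (at x)"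
    and "continuous_on UNIV b" "0 \<le> l" and antiperiodic: "\<xi> l = - \<xi> 0"
  shows "\<xi> 0 = 0"
proof -
  obtain B where B: "\<And>x. x \<in> {0..l} \<Longrightarrow> (B has_real_derivative b x) (at x)"
    using exists_antiderivative[OF assms(2)] by blast
  define h where "h x = exp (- B x) *\<^sub>R \<xi> x" for x
  have "(h has_derivative (\<lambda>_. 0)) (at x within {0..l})" if "x \<in> {0..l}" for x
  proof -
    have "((\<lambda>x. exp (- B x)) has_real_derivative exp (- B x) * (- b x)) (at x)"
      using B[OF that] by (auto intro!: derivative_eq_intros)
    from has_vector_derivative_scaleR[OF this ode[of x]]
    have "(h has_vector_derivative 0) (at x)" unfolding h_def by simp
    then show ?thesis by (simp add: has_vector_derivative_def has_derivative_at_withinI)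
  qed
  then have "h l = h 0"
    using has_derivative_zero_constant[of "{0..l}" h] \<open>0 \<le> l\<close> by fastforce
  then have "(exp (- B l) + exp (- B 0)) *\<^sub>R \<xi> 0 = 0"
    by (simp add: h_def antiperiodic scaleR_left_distrib) (metis neg_eq_iff_add_eq_0)
  moreover have "exp (- B l) + exp (- B 0) > 0" by (intro add_pos_pos) auto
  ultimately show ?thesis by simp
qed

lemma Rolle_weighted:
  fixes f g :: "real \<Rightarrow> real"
  assumes "s0 < s1" "f s0 = 0" "f s1 = 0" "continuous_on UNIV g"
    and f': "\<And>x. x \<in> {s0..s1} \<Longrightarrow> (f has_real_derivative f' x) (at x)"
  shows "\<exists>t. s0 < t \<and> t < s1 \<and> f' t = f t * g t"
proof -
  obtain B where B: "\<And>x. x \<in> {s0..s1} \<Longrightarrow> (B has_real_derivative g x) (at x)"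
    using exists_antiderivative[OF assms(4)] by blast
  define h where "h x = exp (- B x) * f x" for x
  have h': "(h has_real_derivative exp (- B x) * (f' x - f x * g x)) (at x)"
    if "x \<in> {s0..s1}" for x
    unfolding h_def using B[OF that] f'[OF that]
    by (auto intro!: derivative_eq_intros simp: algebra_simps)
  have "\<exists>t. s0 < t \<and> t < s1 \<and> (h has_real_derivative 0) (at t)"
  proof (rule Rolle)
    show "h s0 = h s1" using assms(2,3) by (simp add: h_def)
    show "continuous_on {s0..s1} h"
      using h' by (intro continuous_at_imp_continuous_on) (blast intro: DERIV_isCont)
    show "h differentiable (at x)" if "s0 < x" "x < s1" for x
      using h'[of x] that real_differentiable_def by fastforce
  qed fact
  then obtain t where t: "s0 < t" "t < s1" "(h has_real_derivative 0) (at t)" by blast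
  then have "exp (- B t) * (f' t - f t * g t) = 0" using h'[of t] DERIV_unique by force
  then show ?thesis using t by auto
qed

lemma antiperiodic_has_zero:
  fixes a :: "real \<Rightarrow> real"
  assumes "continuous_on UNIV a" "a (s + l) = - a s" "0 \<le> l"
  shows "\<exists>z. s \<le> z \<and> z \<le> s + l \<and> a z = 0"
proof (cases "a s \<le> 0")
  case True
  then show ?thesis
    using assms by (intro IVT'[of a s 0 "s + l"]) (auto intro: continuous_on_subset)
next
  case False
  then show ?thesis
    using assms by (intro IVT2'[of a "s + l" 0 s]) (auto intro: continuous_on_subset)
qed

lemma antiperiodic_zero_free_interval:
  fixes a :: "real \<Rightarrow> real"
  assumes cont: "continuous_on UNIV a" and antiperiodic: "\<And>s. a (s + l) = - a s"
    and "0 \<le> l" "a s \<noteq> 0"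
  obtains s0 s1 where "s0 < s" "s < s1" "a s0 = 0" "a s1 = 0" "\<And>x. x \<in> {s0<..<s1} \<Longrightarrow> a x \<noteq> 0"
proof -
  let ?Z = "{z. a z = 0}"
  have "closed ?Z" using cont by (intro closed_Collect_eq continuous_on_const) auto
  then have compact: "compact ({s..s + l} \<inter> ?Z)" "compact ({s - l..s} \<inter> ?Z)" by auto
  have "{s..s + l} \<inter> ?Z \<noteq> {}" "{s - l..s} \<inter> ?Z \<noteq> {}"
    using antiperiodic_has_zero[OF cont antiperiodic \<open>0 \<le> l\<close>, of s]
      antiperiodic_has_zero[OF cont antiperiodic[of "s - l"] \<open>0 \<le> l\<close>] by auto
  then obtain s1 s0 where
    s1: "s1 \<in> {s..s + l} \<inter> ?Z" "\<And>z. z \<in> {s..s + l} \<inter> ?Z \<Longrightarrow> s1 \<le> z" and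
    s0: "s0 \<in> {s - l..s} \<inter> ?Z" "\<And>z. z \<in> {s - l..s} \<inter> ?Z \<Longrightarrow> z \<le> s0"
    using compact_attains_inf[OF compact(1)] compact_attains_sup[OF compact(2)] by metis
  have "s0 < s" "s < s1" using s0(1) s1(1) \<open>a s \<noteq> 0\<close> by (auto simp: order.order_iff_strict)
  moreover have "a x \<noteq> 0" if x: "x \<in> {s0<..<s1}" for x
  proof
    assume "a x = 0"
    show False
    proof (cases "s \<le> x")
      case True
      then have "s1 \<le> x" using s1 x \<open>a x = 0\<close> by auto
      then show False using x by simp
    next
      case False
      then have "x \<le> s0" using s0 x \<open>a x = 0\<close> by auto
      then show False using x by simp
    qed
  qed
  ultimately show thesis using that s0(1) s1(1) by blast
qed

definition fC_derivative :: "real \<times> real \<Rightarrow> real \<times> real \<Rightarrow> real^3" where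
  "fC_derivative z v = vector [6 * (fst z)\<^sup>2 * fst v, - 6 * fst z * fst v, snd v]"

lemma vector_3_eq_sum_axis:
  "(vector [a, b, c] :: real^3) = a *\<^sub>R axis 1 1 + b *\<^sub>R axis 2 1 + c *\<^sub>R axis 3 1"
  by (simp add: vec_eq_iff forall_3 axis_def)

lemma has_derivative_fC: "(fC has_derivative fC_derivative z) (at z)"
proof -
  have fC_eq: "fC = (\<lambda>z. (2 * fst z ^ 3) *\<^sub>R axis 1 1 + (- 3 * (fst z)\<^sup>2) *\<^sub>R axis 2 1
      + snd z *\<^sub>R axis 3 1)"
    by (auto simp: fC_def vector_3_eq_sum_axis)
  show ?thesis
    unfolding fC_eq fC_derivative_def[abs_def] vector_3_eq_sum_axis
    by (auto intro!: derivative_eq_intros ext simp: power2_eq_square algebra_simps)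
qed

lemma fC_derivative_nth_3 [simp]: "fC_derivative z v $ 3 = snd v"
  by (simp add: fC_derivative_def)

lemma two_le_dim_range_fC_derivative:
  assumes "fst z \<noteq> 0"
  shows "2 \<le> dim (range (fC_derivative z))"
proof (rule two_le_dim_if_independent_pair)
  fix c d assume "c *\<^sub>R fC_derivative z (1, 0) + d *\<^sub>R fC_derivative z (0, 1) = 0"
  then have "c * (6 * (fst z)\<^sup>2) = 0" "d = 0"
    by (auto simp: fC_derivative_def vec_eq_iff forall_3)
  then show "c = 0 \<and> d = 0" using assms by simp
qed auto

lemma fst_eq_0_if_fC_derivative_factors_rank_lt_2:
  fixes L :: "real^3 \<Rightarrow> real^3" and M :: "real \<times> real \<Rightarrow> real^3" and P :: "real \<times> real \<Rightarrow> real \<times> real"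
  assumes factor: "L \<circ> M = fC_derivative z \<circ> P" and "linear L" "surj P" "dim (range M) < 2"
  shows "fst z = 0"
proof (rule ccontr)
  assume "fst z \<noteq> 0"
  have "range (fC_derivative z) = range (L \<circ> M)"
    using \<open>surj P\<close> by (simp only: factor image_comp[symmetric])
  also have "dim \<dots> \<le> dim (range M)"
    using dim_image_le[OF \<open>linear L\<close>, of "range M"] by (simp add: image_comp)
  finally show False
    using two_le_dim_range_fC_derivative[OF \<open>fst z \<noteq> 0\<close>] \<open>dim (range M) < 2\<close> by simp
qed

lemma diffeo_derivative_inj:
  assumes "diffeo \<phi>"
  shows "inj (frechet_derivative \<phi> (at x))"
proof -
  let ?D\<phi> = "frechet_derivative \<phi> (at x)" and ?Dinv = "frechet_derivative (inv \<phi>) (at (\<phi> x))"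
  have "(\<phi> has_derivative ?D\<phi>) (at x)" "(inv \<phi> has_derivative ?Dinv) (at (\<phi> x))"
    using assms unfolding diffeo_def
    by (simp_all add: smooth_differentiable frechet_derivative_works[symmetric])
  from diff_chain_at[OF this] have "(inv \<phi> \<circ> \<phi> has_derivative ?Dinv \<circ> ?D\<phi>) (at x)" .
  moreover have "inv \<phi> \<circ> \<phi> = (\<lambda>y. y)" using assms by (auto simp: diffeo_def bij_def)
  ultimately have "?Dinv \<circ> ?D\<phi> = (\<lambda>y. y)"
    using has_derivative_unique[OF _ has_derivative_ident] by simp
  then show ?thesis by (metis comp_apply injI)
qed

lemma rl_equivalent_fC_chartE:
  fixes F :: "real \<times> real \<Rightarrow> real^3"
  assumes DF: "\<And>q. (F has_derivative DF q) (at q)" and "rl_equivalent F p fC 0"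
  obtains \<phi> :: "real \<times> real \<Rightarrow> real \<times> real" and U where "open U" "p \<in> U"
    and "(\<phi> has_derivative frechet_derivative \<phi> (at p)) (at p)" "inj (frechet_derivative \<phi> (at p))"
    and "\<And>q. q \<in> U \<Longrightarrow> singular_point F q \<Longrightarrow> fst (\<phi> q) = 0"
    and "\<And>v. DF p v = 0 \<Longrightarrow> snd (frechet_derivative \<phi> (at p) v) = 0"
proof -
  obtain \<phi> \<Phi> U where diffeos: "diffeo \<phi>" "diffeo \<Phi>" and "\<phi> p = 0" "open U" "p \<in> U"
    and conj: "\<And>x. x \<in> U \<Longrightarrow> \<Phi> (F x) = fC (\<phi> x)"
    using assms(2) unfolding rl_equivalent_def by blast
  define D\<phi> where "D\<phi> q = frechet_derivative \<phi> (at q)" for q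
  define D\<Phi> where "D\<Phi> q = frechet_derivative \<Phi> (at q)" for q
  have \<phi>': "(\<phi> has_derivative D\<phi> q) (at q)" and \<Phi>': "(\<Phi> has_derivative D\<Phi> y) (at y)" for q y
    using diffeos unfolding diffeo_def D\<phi>_def D\<Phi>_def
    by (simp_all add: smooth_differentiable frechet_derivative_works[symmetric])
  have chain: "D\<Phi> (F q) \<circ> DF q = fC_derivative (\<phi> q) \<circ> D\<phi> q" if "q \<in> U" for q
  proof -
    have "((\<lambda>x. \<Phi> (F x)) has_derivative D\<Phi> (F q) \<circ> DF q) (at q)"
      using diff_chain_at[OF DF \<Phi>'] by (simp add: o_def)
    then have "((\<lambda>x. fC (\<phi> x)) has_derivative D\<Phi> (F q) \<circ> DF q) (at q)"
      by (rule has_derivative_transform_within_open[OF _ \<open>open U\<close> that]) (simp add: conj)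
    moreover have "((\<lambda>x. fC (\<phi> x)) has_derivative fC_derivative (\<phi> q) \<circ> D\<phi> q) (at q)"
      using diff_chain_at[OF \<phi>' has_derivative_fC] by (simp add: o_def)
    ultimately show ?thesis by (rule has_derivative_unique)
  qed
  have "fst (\<phi> q) = 0" if "q \<in> U" "singular_point F q" for q
  proof (rule fst_eq_0_if_fC_derivative_factors_rank_lt_2[OF chain[OF that(1)]])
    show "linear (D\<Phi> (F q))" by (rule has_derivative_linear[OF \<Phi>'])
    show "surj (D\<phi> q)"
      using diffeo_derivative_inj[OF diffeos(1)] linear_injective_imp_surjective
        has_derivative_linear[OF \<phi>'] unfolding D\<phi>_def by blast
    show "dim (range (DF q)) < 2"
      using that(2) by (simp add: singular_point_def frechet_derivative_at[OF DF, symmetric])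
  qed
  moreover have "snd (D\<phi> p v) = 0" if "DF p v = 0" for v
  proof -
    have "fC_derivative 0 (D\<phi> p v) = D\<Phi> (F p) (DF p v)"
      using fun_cong[OF chain[OF \<open>p \<in> U\<close>], of v] \<open>\<phi> p = 0\<close> by simp
    also have "\<dots> = 0" using that linear_0[OF has_derivative_linear[OF \<Phi>']] by simp
    finally show ?thesis using fC_derivative_nth_3[of 0 "D\<phi> p v"] by simp
  qed
  ultimately show thesis
    using that[OF \<open>open U\<close> \<open>p \<in> U\<close> \<phi>'[of p, unfolded D\<phi>_def]
        diffeo_derivative_inj[OF diffeos(1), of p]]
    unfolding D\<phi>_def by simp
qed

lemma not_rl_equivalent_fC_if_null_vector_tangent:
  fixes F :: "real \<times> real \<Rightarrow> real^3" and \<sigma> :: "real \<Rightarrow> real \<times> real"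
  assumes DF: "\<And>q. (F has_derivative DF q) (at q)"
    and null: "DF p \<eta> = 0" "\<eta> \<noteq> 0"
    and \<sigma>': "(\<sigma> has_vector_derivative \<eta>) (at t)" "\<sigma> t = p"
    and "open T" "t \<in> T" "continuous_on T \<sigma>" and singular: "\<And>t'. t' \<in> T \<Longrightarrow> singular_point F (\<sigma> t')"
  shows "\<not> rl_equivalent F p fC 0"
proof
  assume "rl_equivalent F p fC 0"
  obtain U and \<phi> :: "real \<times> real \<Rightarrow> real \<times> real" where "open U" "p \<in> U"
    and \<phi>': "(\<phi> has_derivative frechet_derivative \<phi> (at p)) (at p)"
    and inj: "inj (frechet_derivative \<phi> (at p))"
    and sing: "\<And>q. q \<in> U \<Longrightarrow> singular_point F q \<Longrightarrow> fst (\<phi> q) = 0"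
    and ker: "\<And>v. DF p v = 0 \<Longrightarrow> snd (frechet_derivative \<phi> (at p) v) = 0"
    by (rule rl_equivalent_fC_chartE[OF DF \<open>rl_equivalent F p fC 0\<close>]) (rule that)
  let ?D\<phi> = "frechet_derivative \<phi> (at p)"
  have "openin (top_of_set T) (T \<inter> \<sigma> -` U)"
    using continuous_openin_preimage_gen[OF \<open>continuous_on T \<sigma>\<close> \<open>open U\<close>] by simp
  then have "open (T \<inter> \<sigma> -` U)" using \<open>open T\<close> openin_open_trans by blast
  moreover have "t \<in> T \<inter> \<sigma> -` U" using \<open>t \<in> T\<close> \<sigma>'(2) \<open>p \<in> U\<close> by simp
  moreover have "0 = fst (\<phi> (\<sigma> t'))" if "t' \<in> T \<inter> \<sigma> -` U" for t'
    using that sing singular by simp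
  ultimately have "((\<lambda>t'. fst (\<phi> (\<sigma> t'))) has_derivative (\<lambda>_. 0)) (at t)"
    by (rule has_derivative_transform_within_open[OF has_derivative_const])
  moreover have "((\<lambda>t'. fst (\<phi> (\<sigma> t'))) has_derivative (\<lambda>h. fst (?D\<phi> (h *\<^sub>R \<eta>)))) (at t)"
    using diff_chain_at[OF \<sigma>'(1)[unfolded has_vector_derivative_def] \<phi>'[folded \<sigma>'(2)]]
    by (intro derivative_eq_intros) (auto simp: o_def \<sigma>'(2))
  ultimately have "(\<lambda>_. 0) = (\<lambda>h. fst (?D\<phi> (h *\<^sub>R \<eta>)))"
    by (rule has_derivative_unique)
  from fun_cong[OF this, of 1] have "fst (?D\<phi> \<eta>) = 0" by simp
  moreover have "snd (?D\<phi> \<eta>) = 0" using ker[OF null(1)] .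
  ultimately have "?D\<phi> \<eta> = ?D\<phi> 0"
    using linear_0[OF has_derivative_linear[OF \<phi>']] by (simp add: prod_eq_iff)
  then show False using injD[OF inj] null(2) by blast
qed

lemma openin_mob_top: "openin (mob_top l) U \<longleftrightarrow> U \<subseteq> UNIV // mob_rel l \<and> open (\<Union>U)"
  by (simp add: mob_top_def quot_top_def istopology_quot[OF equiv_mob_rel])

lemma topspace_mob_top: "topspace (mob_top l) = UNIV // mob_rel l"
proof
  show "topspace (mob_top l) \<subseteq> UNIV // mob_rel l" unfolding topspace_def openin_mob_top by blast
  have "openin (mob_top l) (UNIV // mob_rel l)"
    unfolding openin_mob_top Union_quotient[OF equiv_mob_rel] by simp
  then show "UNIV // mob_rel l \<subseteq> topspace (mob_top l)" by (rule openin_subset)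
qed

lemma mob_rel_class_self: "p \<in> mob_rel l `` {p}"
  using equiv_class_self[OF equiv_mob_rel] by blast

lemma continuous_map_mob_class:
  assumes "continuous_on T \<sigma>"
  shows "continuous_map (top_of_set T) (mob_top l) (\<lambda>t. mob_rel l `` {\<sigma> t})"
  unfolding continuous_map_def
proof (intro conjI allI impI)
  show "(\<lambda>t. mob_rel l `` {\<sigma> t}) \<in> topspace (top_of_set T) \<rightarrow> topspace (mob_top l)"
    by (auto simp: topspace_mob_top quotientI)
  fix U assume U: "openin (mob_top l) U"
  have "mob_rel l `` {\<sigma> t} \<in> U \<longleftrightarrow> \<sigma> t \<in> \<Union>U" for t
  proof
    assume "\<sigma> t \<in> \<Union>U"
    then obtain c where c: "c \<in> U" "\<sigma> t \<in> c" by auto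
    have "c \<in> UNIV // mob_rel l" using U c(1) by (auto simp: openin_mob_top)
    then obtain y where "c = mob_rel l `` {y}" by (rule quotientE)
    then have "mob_rel l `` {\<sigma> t} = c" using c(2) equiv_class_eq[OF equiv_mob_rel] by auto
    then show "mob_rel l `` {\<sigma> t} \<in> U" using c(1) by simp
  qed (use mob_rel_class_self in blast)
  then have "{t \<in> topspace (top_of_set T). mob_rel l `` {\<sigma> t} \<in> U} = T \<inter> \<sigma> -` \<Union>U" by auto
  then show "openin (top_of_set T) {t \<in> topspace (top_of_set T). mob_rel l `` {\<sigma> t} \<in> U}"
    using U continuous_openin_preimage_gen[OF assms] by (simp add: openin_mob_top)
qed

lemma mob_rel_invariant:
  assumes step: "\<And>s u. P (s, u) \<Longrightarrow> P (s + l, - u)" "\<And>s u. P (s, u) \<Longrightarrow> P (s - l, - u)"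
    and "P p" "(p, q) \<in> mob_rel l"
  shows "P q"
proof -
  obtain s u n where p: "p = (s, u)" and q: "q = (s + of_int n * l, if even n then u else - u)"
    using assms(4) unfolding mob_rel_def by auto
  have "P (s + of_int n * l, if even n then u else - u)" for n :: int
  proof (induction n rule: int_induct[where k = 0])
    case base
    then show ?case using \<open>P p\<close> p by simp
  next
    case (step1 i)
    from step(1)[OF step1(2)] show ?case by (cases "even i") (simp_all add: algebra_simps)
  next
    case (step2 i)
    from step(2)[OF step2(2)] show ?case by (cases "even i") (simp_all add: algebra_simps)
  qed
  then show ?thesis using q by simp
qed

lemma has_vector_derivative_shift_periodic:
  fixes f :: "real \<Rightarrow> 'a::real_normed_vector"
  assumes f': "\<And>x. (f has_vector_derivative f' x) (at x)" and shift: "\<And>x. f (x + l) = c *\<^sub>R f x"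
  shows "f' (x + l) = c *\<^sub>R f' x"
proof -
  have "((\<lambda>y. y + l) has_vector_derivative 1) (at x)" by (auto intro!: derivative_eq_intros)
  from vector_diff_chain_at[OF this f'[of "x + l"]]
  have "((\<lambda>y. c *\<^sub>R f y) has_vector_derivative f' (x + l)) (at x)" by (simp add: o_def shift)
  moreover have "((\<lambda>y. c *\<^sub>R f y) has_vector_derivative c *\<^sub>R f' x) (at x)"
    using f'[of x] by (rule bounded_linear.has_vector_derivative[OF bounded_linear_scaleR_right])
  ultimately show ?thesis by (rule vector_derivative_unique_at)
qed

locale developable_moebius_strip =
  fixes \<gamma> \<xi> :: "real \<Rightarrow> real^3" and l :: real
  assumes l_pos: "l > 0"
    and \<gamma>_smooth: "smooth \<gamma>"
    and \<gamma>_periodic: "periodic l \<gamma>"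
    and \<xi>_smooth: "smooth \<xi>"
    and \<xi>_odd: "odd_periodic l \<xi>"
    and indep: "\<forall>s a b. a *\<^sub>R vector_derivative \<gamma> (at s) + b *\<^sub>R \<xi> s = 0 \<longrightarrow> a = 0 \<and> b = 0"
    and det0: "\<forall>s. det (vector [vector_derivative \<gamma> (at s), \<xi> s,
                                 vector_derivative \<xi> (at s)] :: real^3^3) = 0"
begin

abbreviation "\<gamma>' s \<equiv> vector_derivative \<gamma> (at s)"
abbreviation "\<xi>' s \<equiv> vector_derivative \<xi> (at s)"
abbreviation "F \<equiv> asym_completion \<gamma> \<xi>"

definition a :: "real \<Rightarrow> real" where "a s = span_pair_coeff_fst (\<gamma>' s) (\<xi> s) (\<xi>' s)"
definition b :: "real \<Rightarrow> real" where "b s = span_pair_coeff_snd (\<gamma>' s) (\<xi> s) (\<xi>' s)"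

lemma frame_independent: "c *\<^sub>R \<gamma>' s + d *\<^sub>R \<xi> s = 0 \<Longrightarrow> c = 0 \<and> d = 0"
  using indep by blast

lemma \<gamma>_has_vector_derivative: "(\<gamma> has_vector_derivative \<gamma>' s) (at s)"
  and \<xi>_has_vector_derivative: "(\<xi> has_vector_derivative \<xi>' s) (at s)"
  using \<gamma>_smooth \<xi>_smooth by (simp_all add: smooth_has_vector_derivative)

lemma \<xi>'_eq: "\<xi>' s = a s *\<^sub>R \<gamma>' s + b s *\<^sub>R \<xi> s"
  unfolding a_def b_def using frame_independent det0
  by (intro in_span_pair_eq_coeffs det_eq_0_imp_in_span_pair) auto

lemma a_differentiable: "a differentiable (at s)"
proof -
  have "\<gamma>' differentiable (at s)" "\<xi>' differentiable (at s)" "\<xi> differentiable (at s)"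
    using \<gamma>_smooth \<xi>_smooth
    by (simp_all add: smooth_vector_derivative_differentiable smooth_differentiable)
  then show ?thesis
    using gram_det_nonzero[of "\<gamma>' s" "\<xi> s", OF frame_independent]
    unfolding a_def[abs_def] span_pair_coeff_fst_def
    by (intro derivative_intros differentiable_inner) auto
qed

lemma continuous_a: "continuous_on S a"
  using a_differentiable differentiable_imp_continuous_within
  by (blast intro: continuous_at_imp_continuous_on)

lemma continuous_b: "continuous_on S b"
proof -
  have "isCont \<gamma>' s" "isCont \<xi>' s" "isCont \<xi> s" for s
    using \<gamma>_smooth \<xi>_smooth
    by (simp_all add: differentiable_imp_continuous_within smooth_vector_derivative_differentiable
        smooth_differentiable)
  then have "isCont b s" for s
    using gram_det_nonzero[of "\<gamma>' s" "\<xi> s", OF frame_independent]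
    unfolding b_def[abs_def] span_pair_coeff_snd_def by (intro continuous_intros) auto
  then show ?thesis by (simp add: continuous_at_imp_continuous_on)
qed

lemma a_has_real_derivative: "(a has_real_derivative deriv a s) (at s)"
  using a_differentiable DERIV_deriv_iff_real_differentiable by blast

lemma a_antiperiodic: "a (s + l) = - a s" and b_periodic: "b (s + l) = b s"
proof -
  have \<xi>_shift: "\<xi> (s + l) = - \<xi> s" using \<xi>_odd by (simp add: odd_periodic_def)
  have "\<gamma>' (s + l) = \<gamma>' s"
    using has_vector_derivative_shift_periodic[OF \<gamma>_has_vector_derivative, of l 1]
      \<gamma>_periodic by (simp add: periodic_def)
  moreover have "\<xi>' (s + l) = - \<xi>' s"
    using has_vector_derivative_shift_periodic[OF \<xi>_has_vector_derivative, of l "-1"]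
      \<xi>_odd by (simp add: odd_periodic_def)
  ultimately have "a (s + l) *\<^sub>R \<gamma>' s + b (s + l) *\<^sub>R (- \<xi> s) = - (a s *\<^sub>R \<gamma>' s + b s *\<^sub>R \<xi> s)"
    using \<xi>'_eq[of "s + l"] \<xi>'_eq[of s] by (simp add: \<xi>_shift)
  then have "(a (s + l) + a s) *\<^sub>R \<gamma>' s + (b s - b (s + l)) *\<^sub>R \<xi> s = 0"
    by (simp add: algebra_simps)
  from frame_independent[OF this] show "a (s + l) = - a s" "b (s + l) = b s" by auto
qed

lemma a_antiperiodic': "a (s - l) = - a s"
  using a_antiperiodic[of "s - l"] by simp

lemma deriv_a_antiperiodic: "deriv a (s + l) = - deriv a s"
  using has_vector_derivative_shift_periodic[of a "deriv a" l "-1"] a_antiperiodic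
    a_has_real_derivative by (simp add: has_real_derivative_iff_has_vector_derivative)

definition DF :: "real \<times> real \<Rightarrow> real \<times> real \<Rightarrow> real^3" where
  "DF p v = fst v *\<^sub>R (\<gamma>' (fst p) + snd p *\<^sub>R \<xi>' (fst p)) + snd v *\<^sub>R \<xi> (fst p)"

lemma has_derivative_F: "(F has_derivative DF p) (at p)"
proof -
  have fst': "(fst has_derivative fst) (at p)" by (rule has_derivative_fst[OF has_derivative_ident])
  have snd': "(snd has_derivative snd) (at p)" by (rule has_derivative_snd[OF has_derivative_ident])
  have "((\<lambda>z. \<gamma> (fst z)) has_derivative (\<lambda>v. fst v *\<^sub>R \<gamma>' (fst p))) (at p)"
    using diff_chain_at[OF fst' \<gamma>_has_vector_derivative[unfolded has_vector_derivative_def]]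
    by (simp add: o_def)
  moreover have "((\<lambda>z. \<xi> (fst z)) has_derivative (\<lambda>v. fst v *\<^sub>R \<xi>' (fst p))) (at p)"
    using diff_chain_at[OF fst' \<xi>_has_vector_derivative[unfolded has_vector_derivative_def]]
    by (simp add: o_def)
  ultimately have "((\<lambda>z. \<gamma> (fst z) + snd z *\<^sub>R \<xi> (fst z)) has_derivative
      (\<lambda>v. fst v *\<^sub>R \<gamma>' (fst p) + (snd p *\<^sub>R (fst v *\<^sub>R \<xi>' (fst p)) + snd v *\<^sub>R \<xi> (fst p)))) (at p)"
    by (intro has_derivative_add has_derivative_scaleR snd')
  then show ?thesis
    by (simp add: asym_completion_def DF_def[abs_def] case_prod_unfold algebra_simps)
qed

lemma DF_in_frame:
  "DF (s, u) v = (fst v * (1 + u * a s)) *\<^sub>R \<gamma>' s + (fst v * u * b s + snd v) *\<^sub>R \<xi> s"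
  unfolding DF_def using \<xi>'_eq[of s] by (simp add: algebra_simps)

lemma singular_point_F_iff: "singular_point F (s, u) \<longleftrightarrow> u * a s = -1"
proof -
  have D: "frechet_derivative F (at (s, u)) = DF (s, u)"
    using has_derivative_F frechet_derivative_at by metis
  show ?thesis
  proof
    assume "singular_point F (s, u)"
    then have "dim (range (DF (s, u))) < 2" by (simp add: singular_point_def D)
    then show "u * a s = -1"
    proof (rule contrapos_pp)
      assume "u * a s \<noteq> -1"
      show "\<not> dim (range (DF (s, u))) < 2"
      proof (rule leD, rule two_le_dim_if_independent_pair)
        fix c d assume "c *\<^sub>R DF (s, u) (1, 0) + d *\<^sub>R DF (s, u) (0, 1) = 0"
        then have "(c * (1 + u * a s)) *\<^sub>R \<gamma>' s + (c * u * b s + d) *\<^sub>R \<xi> s = 0"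
          by (simp add: DF_in_frame algebra_simps)
        from frame_independent[OF this] have "c * (1 + u * a s) = 0" "c * u * b s + d = 0"
          by auto
        then show "c = 0 \<and> d = 0" using \<open>u * a s \<noteq> -1\<close> by auto
      qed auto
    qed
  next
    assume "u * a s = -1"
    then have "range (DF (s, u)) \<subseteq> span {\<xi> s}"
      by (auto simp: DF_in_frame span_singleton)
    then have "dim (range (DF (s, u))) \<le> card {\<xi> s}"
      by (rule dim_le_card) simp
    then show "singular_point F (s, u)" by (simp add: singular_point_def D)
  qed
qed

text \<open>The singular curve through (t, -1/a t) has velocity (1, a'/a^2) and the null direction
  of DF there is (1, b/a); they are parallel exactly when a' = a b.\<close>

definition null_tangent_point :: "real \<times> real \<Rightarrow> bool" where
  "null_tangent_point p \<longleftrightarrow> snd p * a (fst p) = -1 \<and> deriv a (fst p) = a (fst p) * b (fst p)"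

lemma null_tangent_point_not_cuspidal_edge:
  assumes "null_tangent_point (s, u)"
  shows "singular_point F (s, u) \<and> \<not> cuspidal_edge F (s, u)"
proof -
  have u: "u * a s = -1" and a': "deriv a s = a s * b s"
    using assms by (simp_all add: null_tangent_point_def)
  then have "a s \<noteq> 0" by auto
  let ?\<sigma> = "\<lambda>t. (t, - 1 / a t)" and ?\<eta> = "(1::real, b s / a s)"
  have "((\<lambda>t. - 1 / a t) has_real_derivative b s / a s) (at s)"
    using a_has_real_derivative[of s] \<open>a s \<noteq> 0\<close> a'
    by (auto intro!: derivative_eq_intros simp: power2_eq_square)
  then have \<sigma>': "(?\<sigma> has_vector_derivative ?\<eta>) (at s)"
    by (intro has_vector_derivative_Pair has_vector_derivative_id)
      (simp add: has_real_derivative_iff_has_vector_derivative)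
  have null: "DF (s, u) ?\<eta> = 0"
  proof -
    have "u * (a s * b s) = - b s" using u by (metis mult.assoc mult_minus_left mult_1)
    then show ?thesis using u \<open>a s \<noteq> 0\<close> by (simp add: DF_in_frame field_simps)
  qed
  have "?\<eta> \<noteq> 0" by (simp add: prod_eq_iff)
  have "\<not> rl_equivalent F (s, u) fC 0"
  proof (rule not_rl_equivalent_fC_if_null_vector_tangent
      [OF has_derivative_F null \<open>?\<eta> \<noteq> 0\<close> \<sigma>', where T = "{t. a t \<noteq> 0}"])
    show "?\<sigma> s = (s, u)" using u \<open>a s \<noteq> 0\<close> by (simp add: field_simps)
    show "open {t. a t \<noteq> 0}"
      using continuous_a by (intro open_Collect_neq continuous_on_const) auto
    show "continuous_on {t. a t \<noteq> 0} ?\<sigma>"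
      using continuous_a by (intro continuous_intros) auto
    show "singular_point F (?\<sigma> t)" if "t \<in> {t. a t \<noteq> 0}" for t
      using that by (simp add: singular_point_F_iff)
  qed (use \<open>a s \<noteq> 0\<close> in simp)
  then show ?thesis using u by (simp add: cuspidal_edge_def singular_point_F_iff)
qed

lemma singular_point_F_mob_rel:
  assumes "singular_point F p" "(p, q) \<in> mob_rel l"
  shows "singular_point F q"
proof -
  have "snd q * a (fst q) = -1"
  proof (rule mob_rel_invariant[where P = "\<lambda>p. snd p * a (fst p) = -1", OF _ _ _ assms(2)])
    show "snd p * a (fst p) = -1" using assms(1) by (cases p) (simp add: singular_point_F_iff)
  qed (simp_all add: a_antiperiodic a_antiperiodic')
  then show ?thesis by (cases q) (simp add: singular_point_F_iff)
qed

lemma null_tangent_point_mob_rel: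
  "null_tangent_point p \<Longrightarrow> (p, q) \<in> mob_rel l \<Longrightarrow> null_tangent_point q"
proof (rule mob_rel_invariant[where P = null_tangent_point])
  have "deriv a (s - l) = - deriv a s" for s
    using deriv_a_antiperiodic[of "s - l"] by simp
  moreover have "b (s - l) = b s" for s
    using b_periodic[of "s - l"] by simp
  ultimately show "null_tangent_point (s + l, - u)" "null_tangent_point (s - l, - u)"
    if "null_tangent_point (s, u)" for s u
    using that by (simp_all add: null_tangent_point_def a_antiperiodic a_antiperiodic'
        b_periodic deriv_a_antiperiodic)
qed

lemma a_not_identically_zero: "\<exists>s. a s \<noteq> 0"
proof (rule ccontr)
  assume "\<nexists>s. a s \<noteq> 0"
  then have "(\<xi> has_vector_derivative b s *\<^sub>R \<xi> s) (at s)" for s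
    using \<xi>_has_vector_derivative[of s] \<xi>'_eq[of s] by simp
  then have "\<xi> 0 = 0"
    using \<xi>_odd[unfolded odd_periodic_def, rule_format, of 0] l_pos continuous_b
    by (intro linear_ode_antiperiodic_solution_zero[of \<xi> b l]) auto
  then show False using frame_independent[of 0 0 1] by simp
qed

lemma null_tangent_point_between_zeros:
  assumes "a s \<noteq> 0"
  obtains s0 s1 t where "s0 < s" "s < s1" "\<And>x. x \<in> {s0<..<s1} \<Longrightarrow> a x \<noteq> 0"
    and "t \<in> {s0<..<s1}" "null_tangent_point (t, - 1 / a t)"
proof -
  obtain s0 s1 where s01: "s0 < s" "s < s1" "a s0 = 0" "a s1 = 0"
    and nz: "\<And>x. x \<in> {s0<..<s1} \<Longrightarrow> a x \<noteq> 0"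
    using antiperiodic_zero_free_interval[OF continuous_a a_antiperiodic _ assms] l_pos
    by (metis less_imp_le)
  obtain t where "s0 < t" "t < s1" "deriv a t = a t * b t"
    using Rolle_weighted[of s0 s1 a b "deriv a"] s01 continuous_b a_has_real_derivative by auto
  moreover from this have "a t \<noteq> 0" using nz by simp
  ultimately show thesis
    using that s01(1,2) nz by (simp add: null_tangent_point_def)
qed

lemma mob_class_in_singular_set:
  "singular_point F p \<Longrightarrow> mob_rel l `` {p} \<in> singular_set l F"
  unfolding singular_set_def using singular_point_F_mob_rel by (auto intro: quotientI)

lemma null_tangent_class_not_cuspidal_edge:
  assumes "null_tangent_point p" "q \<in> mob_rel l `` {p}"
  shows "singular_point F q \<and> \<not> cuspidal_edge F q"
proof -
  have "null_tangent_point q" using null_tangent_point_mob_rel assms by simp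
  then show ?thesis by (cases q) (simp add: null_tangent_point_not_cuspidal_edge)
qed

lemma connected_component_has_non_cuspidal_class:
  assumes "C \<in> connected_components_of (subtopology (mob_top l) (singular_set l F))"
  shows "\<exists>c\<in>C. \<forall>p\<in>c. singular_point F p \<and> \<not> cuspidal_edge F p"
proof -
  let ?X = "subtopology (mob_top l) (singular_set l F)"
  have "topspace ?X = singular_set l F" by (auto simp: topspace_mob_top singular_set_def)
  then obtain c0 where c0: "c0 \<in> singular_set l F" and C: "C = connected_component_of_set ?X c0"
    using assms unfolding connected_components_of_def by blast
  then obtain s u where c0_eq: "c0 = mob_rel l `` {(s, u)}"
    by (auto simp: singular_set_def elim!: quotientE)
  then have "singular_point F (s, u)" using c0 mob_rel_class_self by (auto simp: singular_set_def)
  then have u: "u * a s = -1" by (simp add: singular_point_F_iff)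
  then have "a s \<noteq> 0" by auto
  then obtain s0 s1 t where "s0 < s" "s < s1" and nz: "\<And>x. x \<in> {s0<..<s1} \<Longrightarrow> a x \<noteq> 0"
    and t: "t \<in> {s0<..<s1}" "null_tangent_point (t, - 1 / a t)"
    by (rule null_tangent_point_between_zeros) (rule that)
  define \<sigma> where "\<sigma> x = mob_rel l `` {(x, - 1 / a x)}" for x
  have "continuous_on {s0<..<s1} (\<lambda>x. (x, - 1 / a x))"
    using nz continuous_a by (intro continuous_intros) auto
  then have "continuous_map (top_of_set {s0<..<s1}) ?X \<sigma>"
    unfolding \<sigma>_def using nz
    by (intro continuous_map_into_subtopology continuous_map_mob_class)
      (auto intro!: mob_class_in_singular_set simp: singular_point_F_iff)
  then have "connectedin ?X (\<sigma> ` {s0<..<s1})"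
    by (rule connectedin_continuous_map_image) (simp add: connectedin_subtopology)
  moreover have "c0 \<in> \<sigma> ` {s0<..<s1}"
  proof
    have "u = - 1 / a s" using u \<open>a s \<noteq> 0\<close> by (simp add: field_simps)
    then show "c0 = \<sigma> s" by (simp add: c0_eq \<sigma>_def)
  qed (use \<open>s0 < s\<close> \<open>s < s1\<close> in simp)
  ultimately have "\<sigma> ` {s0<..<s1} \<subseteq> C"
    unfolding C by (rule connected_component_of_maximal)
  then have "\<sigma> t \<in> C" using t(1) by blast
  then show ?thesis
    using null_tangent_class_not_cuspidal_edge[OF t(2)] unfolding \<sigma>_def by blast
qed

lemma exists_non_cuspidal_singular_point: "\<exists>p. singular_point F p \<and> \<not> cuspidal_edge F p"
proof -
  obtain s where "a s \<noteq> 0" using a_not_identically_zero by blast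
  then obtain t where "null_tangent_point (t, - 1 / a t)"
    by (rule null_tangent_point_between_zeros)
  then show ?thesis using null_tangent_point_not_cuspidal_edge by blast
qed

end

theorem lemma2p7:
  fixes \<gamma> \<xi> :: "real \<Rightarrow> real^3" and l :: real
  assumes l_pos: "l > 0"
    and \<gamma>_smooth: "smooth \<gamma>"
    and \<gamma>_regular: "\<forall>s. vector_derivative \<gamma> (at s) \<noteq> 0"
    and \<gamma>_periodic: "periodic l \<gamma>"
    and \<xi>_smooth: "smooth \<xi>"
    and \<xi>_odd: "odd_periodic l \<xi>"
    and indep: "\<forall>s a b. a *\<^sub>R vector_derivative \<gamma> (at s) + b *\<^sub>R \<xi> s = 0 \<longrightarrow> a = 0 \<and> b = 0"
    and det0: "\<forall>s. det (vector [vector_derivative \<gamma> (at s), \<xi> s,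
                                 vector_derivative \<xi> (at s)] :: real^3^3) = 0"
  defines "F \<equiv> asym_completion \<gamma> \<xi>"
  shows "(\<forall>C \<in> connected_components_of (subtopology (mob_top l) (singular_set l F)).
            \<exists>c\<in>C. \<forall>p\<in>c. singular_point F p \<and> \<not> cuspidal_edge F p)
         \<and> (\<exists>p. singular_point F p \<and> \<not> cuspidal_edge F p)"
proof -
  interpret developable_moebius_strip \<gamma> \<xi> l
    using l_pos \<gamma>_smooth \<gamma>_periodic \<xi>_smooth \<xi>_odd indep det0 by unfold_locales
  show ?thesis
    unfolding F_def
    using connected_component_has_non_cuspidal_class exists_non_cuspidal_singular_point by blast
qed

end
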